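(* Let $L>0$, $d\in\mathbb{N}$, let $I$ be a finite index set and $\mathcal{T}=\{(x_i,g_i,f_i)\}_{i\in I}$ with $x_i,g_i\in\mathbb{R}^d$, $f_i\in\mathbb{R}$. Let $C\subset\mathbb{R}^d$ be a closed convex set with $0\in C$. Define $w_{\mathcal{T}}:\mathbb{R}^d\times\mathbb{R}^d\times\mathbb{R}^I\to\mathbb{R}$ by \[ w_{\mathcal{T}}(y,\nu,\alpha)=\frac{L}{2}\Big\|y+\nu-\sum_{i\in I}\alpha_i\big(x_i-\tfrac1L g_i\big)\Big\|^2+\sum_{i\in I}\alpha_i\Big(f_i-\tfrac{1}{2L}\|g_i\|^2\Big), \] and $W^C_{\mathcal{T}}(y)=\min_{\nu\in C,\ \alpha\in\Delta_I} w_{\mathcal{T}}(y,\nu,\alpha)$, where $\Delta_I=\{\alpha\in\mathbb{R}^I:\sum_{i\in I}\alpha_i=1,\ \alpha_i\geq 0\ \forall i\}$. Then $W^C_{\mathcal{T}}$ is convex and belongs to $C^{1,1}_L$. Furthermore, for any $i\in I$ such that $P_C(-\frac1L g_i)=0$ and \[ \frac{1}{2L}\|g_i-g_j\|^2\leq f_j-f_i-\langle g_i,x_j-x_i\rangle\quad\text{for all } j\in I, \] we have $W^C_{\mathcal{T}}(x_i)=f_i$ and $\nabla W^C_{\mathcal{T}}(x_i)=g_i$.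
   Context: $P_C$ denotes the Euclidean projection onto $C$. $C^{1,1}_L$ denotes the class of differentiable functions on $\mathbb{R}^d$ whose gradient is Lipschitz continuous with constant $L$. *)

theory Defs
  imports "HOL-Analysis.Analysis"
begin

definition simplex_idx :: "'i set \<Rightarrow> ('i \<Rightarrow> real) set" where
  "simplex_idx I = {\<alpha>. (\<Sum>k\<in>I. \<alpha> k) = 1 \<and> (\<forall>k\<in>I. \<alpha> k \<ge> 0)}"

definition w_T :: "real \<Rightarrow> 'i set \<Rightarrow> ('i \<Rightarrow> 'a::euclidean_space) \<Rightarrow> ('i \<Rightarrow> 'a) \<Rightarrow> ('i \<Rightarrow> real)
    \<Rightarrow> 'a \<Rightarrow> 'a \<Rightarrow> ('i \<Rightarrow> real) \<Rightarrow> real" where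
  "w_T L I x g f y \<nu> \<alpha> =
     L / 2 * (norm (y + \<nu> - (\<Sum>k\<in>I. \<alpha> k *\<^sub>R (x k - (1 / L) *\<^sub>R g k))))\<^sup>2
     + (\<Sum>k\<in>I. \<alpha> k * (f k - 1 / (2 * L) * (norm (g k))\<^sup>2))"

text \<open>W^C_T(y) = min over nu in C, alpha in the simplex of w_T; defined as the infimum
  (the theorem also asserts that the infimum is attained, i.e. it is a minimum).\<close>
definition W_T :: "real \<Rightarrow> 'i set \<Rightarrow> ('i \<Rightarrow> 'a::euclidean_space) \<Rightarrow> ('i \<Rightarrow> 'a) \<Rightarrow> ('i \<Rightarrow> real)
    \<Rightarrow> 'a set \<Rightarrow> 'a \<Rightarrow> real" where
  "W_T L I x g f C y = Inf {w_T L I x g f y \<nu> \<alpha> | \<nu> \<alpha>. \<nu> \<in> C \<and> \<alpha> \<in> simplex_idx I}"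

definition C11 :: "real \<Rightarrow> ('a::euclidean_space \<Rightarrow> real) \<Rightarrow> bool" where
  "C11 L F \<longleftrightarrow> (\<exists>G. (\<forall>z. (F has_derivative (\<lambda>h. G z \<bullet> h)) (at z))
                   \<and> (\<forall>u v. norm (G u - G v) \<le> L * norm (u - v)))"

end

theory Submission
  imports Defs
begin

text \<open>With node k = (x_k - g_k/L, f_k - |g_k|^2/(2L)) in R^d x R, the function W^C_T is the envelope
  y |-> min {L/2 |y - p|^2 + t | (p, t) in K} of the convex set K obtained from the convex hull of the
  nodes by translating the first component by -C. Such an envelope is convex and L-smooth: its
  gradient is L (y - p(y)), where the first component p(y) of the minimizer is firmly nonexpansive in y.
  At y = x_i the interpolation inequalities say that node i lies below every node on the affine
  function with slope g_i, and P_C(-g_i/L) = 0 says that translating by C cannot help, so node i is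
  the minimizer; this gives W^C_T(x_i) = f_i and gradient L (x_i - (x_i - g_i/L)) = g_i.\<close>

lemma nonneg_if_quadratic_nonneg_near_zero:
  fixes a b :: real
  assumes "\<And>s. 0 < s \<Longrightarrow> s \<le> 1 \<Longrightarrow> 0 \<le> a * s + b * s\<^sup>2"
  shows "0 \<le> a"
proof (rule tendsto_lowerbound)
  show "((\<lambda>s. a + b * s) \<longlongrightarrow> a) (at_right 0)"
    by (auto intro!: tendsto_eq_intros)
  have "0 \<le> a + b * s" if "0 < s" "s < 1" for s
  proof -
    have "0 \<le> s * (a + b * s)"
      using assms[of s] that by (simp add: power2_eq_square algebra_simps)
    then show ?thesis using \<open>0 < s\<close> by (simp add: zero_le_mult_iff)
  qed
  then show "\<forall>\<^sub>F s in at_right 0. 0 \<le> a + b * s"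
    unfolding eventually_at_right[OF zero_less_one] by (intro exI[of _ 1]) auto
qed simp

lemma has_derivative_if_quadratic_remainder:
  fixes F :: "'a::real_normed_vector \<Rightarrow> real"
  assumes "bounded_linear D" and rem: "\<And>y'. \<bar>F y' - F y - D (y' - y)\<bar> \<le> c * (norm (y' - y))\<^sup>2"
  shows "(F has_derivative D) (at y)"
  unfolding has_derivative_at_alt
proof (intro conjI allI impI assms(1))
  fix e :: real assume "e > 0"
  show "\<exists>d>0. \<forall>y'. norm (y' - y) < d \<longrightarrow> norm (F y' - F y - D (y' - y)) \<le> e * norm (y' - y)"
  proof (intro exI[of _ "e / (\<bar>c\<bar> + 1)"] conjI allI impI)
    show "0 < e / (\<bar>c\<bar> + 1)" using \<open>e > 0\<close> by simp
    fix y' assume "norm (y' - y) < e / (\<bar>c\<bar> + 1)"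
    then have "(\<bar>c\<bar> + 1) * norm (y' - y) \<le> e"
      by (simp add: pos_less_divide_eq mult.commute)
    have "c * (norm (y' - y))\<^sup>2 \<le> (\<bar>c\<bar> + 1) * (norm (y' - y))\<^sup>2"
      by (rule mult_right_mono) simp_all
    also have "\<dots> \<le> e * norm (y' - y)"
      using mult_right_mono[OF \<open>(\<bar>c\<bar> + 1) * norm (y' - y) \<le> e\<close> norm_ge_zero]
      by (simp add: power2_eq_square mult.assoc)
    finally have "c * (norm (y' - y))\<^sup>2 \<le> e * norm (y' - y)" .
    then show "norm (F y' - F y - D (y' - y)) \<le> e * norm (y' - y)"
      using rem[of y'] by simp
  qed
qed

lemma power2_norm_add:
  fixes a b :: "'a::real_inner"
  shows "(norm (a + b))\<^sup>2 = (norm a)\<^sup>2 + 2 * (a \<bullet> b) + (norm b)\<^sup>2"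
  unfolding power2_norm_eq_inner by (simp add: inner_add_left inner_add_right inner_commute)

lemma power2_norm_convex_comb:
  fixes a b :: "'a::real_inner"
  assumes "u + v = 1"
  shows "(norm (u *\<^sub>R a + v *\<^sub>R b))\<^sup>2 = u * (norm a)\<^sup>2 + v * (norm b)\<^sup>2 - u * v * (norm (a - b))\<^sup>2"
proof -
  have v: "v = 1 - u" using assms by simp
  show ?thesis
    unfolding v power2_norm_eq_inner
    by (simp add: inner_add_left inner_add_right inner_diff_left inner_diff_right inner_commute algebra_simps)
qed

lemma convex_hull_indexed_finite:
  fixes h :: "'i \<Rightarrow> 'a::real_vector"
  assumes "finite I"
  shows "convex hull (h ` I) = (\<lambda>\<alpha>. \<Sum>k\<in>I. \<alpha> k *\<^sub>R h k) ` simplex_idx I"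
proof (rule hull_unique)
  show "h ` I \<subseteq> (\<lambda>\<alpha>. \<Sum>k\<in>I. \<alpha> k *\<^sub>R h k) ` simplex_idx I"
  proof clarify
    fix i assume "i \<in> I"
    have "(\<Sum>k\<in>I. (if k = i then 1 else 0) *\<^sub>R h k) = (\<Sum>k\<in>I. if k = i then h k else 0)"
      by (rule sum.cong) auto
    then have "h i = (\<Sum>k\<in>I. (if k = i then 1 else 0) *\<^sub>R h k)"
      using \<open>i \<in> I\<close> assms by simp
    moreover have "(\<lambda>k. if k = i then 1 else 0) \<in> simplex_idx I"
      using \<open>i \<in> I\<close> assms by (simp add: simplex_idx_def)
    ultimately show "h i \<in> (\<lambda>\<alpha>. \<Sum>k\<in>I. \<alpha> k *\<^sub>R h k) ` simplex_idx I"
      by (rule image_eqI)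
  qed
  show "convex ((\<lambda>\<alpha>. \<Sum>k\<in>I. \<alpha> k *\<^sub>R h k) ` simplex_idx I)"
  proof (rule convexI, clarify)
    fix \<alpha> \<beta> and u v :: real
    assume "\<alpha> \<in> simplex_idx I" "\<beta> \<in> simplex_idx I" "0 \<le> u" "0 \<le> v" "u + v = 1"
    have "u *\<^sub>R (\<Sum>k\<in>I. \<alpha> k *\<^sub>R h k) + v *\<^sub>R (\<Sum>k\<in>I. \<beta> k *\<^sub>R h k)
        = (\<Sum>k\<in>I. (u * \<alpha> k + v * \<beta> k) *\<^sub>R h k)"
      by (simp add: scaleR_add_left sum.distrib scaleR_sum_right)
    moreover have "(\<lambda>k. u * \<alpha> k + v * \<beta> k) \<in> simplex_idx I"
      using \<open>\<alpha> \<in> simplex_idx I\<close> \<open>\<beta> \<in> simplex_idx I\<close> \<open>0 \<le> u\<close> \<open>0 \<le> v\<close> \<open>u + v = 1\<close>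
      by (auto simp: simplex_idx_def sum.distrib simp flip: sum_distrib_left)
    ultimately show "u *\<^sub>R (\<Sum>k\<in>I. \<alpha> k *\<^sub>R h k) + v *\<^sub>R (\<Sum>k\<in>I. \<beta> k *\<^sub>R h k)
        \<in> (\<lambda>\<alpha>. \<Sum>k\<in>I. \<alpha> k *\<^sub>R h k) ` simplex_idx I"
      by (rule image_eqI)
  qed
  show "(\<lambda>\<alpha>. \<Sum>k\<in>I. \<alpha> k *\<^sub>R h k) ` simplex_idx I \<subseteq> S" if "h ` I \<subseteq> S" "convex S" for S
    using that assms by (auto simp: simplex_idx_def intro!: convex_sum)
qed


definition env_obj :: "real \<Rightarrow> 'a::real_inner \<Rightarrow> 'a \<times> real \<Rightarrow> real" where
  "env_obj L y k = L / 2 * (norm (y - fst k))\<^sup>2 + snd k"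

definition is_env_minimizer :: "real \<Rightarrow> ('a::real_inner \<times> real) set \<Rightarrow> 'a \<Rightarrow> 'a \<times> real \<Rightarrow> bool" where
  "is_env_minimizer L K y k \<longleftrightarrow> k \<in> K \<and> (\<forall>k'\<in>K. env_obj L y k \<le> env_obj L y k')"

definition quad_envelope :: "real \<Rightarrow> ('a::real_inner \<times> real) set \<Rightarrow> 'a \<Rightarrow> real" where
  "quad_envelope L K y = Inf (env_obj L y ` K)"

lemma env_obj_convex_comb:
  assumes "u + v = 1"
  shows "env_obj L (u *\<^sub>R y1 + v *\<^sub>R y2) (u *\<^sub>R k1 + v *\<^sub>R k2)
    = u * env_obj L y1 k1 + v * env_obj L y2 k2 - L / 2 * u * v * (norm ((y1 - fst k1) - (y2 - fst k2)))\<^sup>2"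
proof -
  have "u *\<^sub>R y1 + v *\<^sub>R y2 - fst (u *\<^sub>R k1 + v *\<^sub>R k2) = u *\<^sub>R (y1 - fst k1) + v *\<^sub>R (y2 - fst k2)"
    by (simp add: algebra_simps)
  then have norm_eq: "(norm (u *\<^sub>R y1 + v *\<^sub>R y2 - fst (u *\<^sub>R k1 + v *\<^sub>R k2)))\<^sup>2
      = u * (norm (y1 - fst k1))\<^sup>2 + v * (norm (y2 - fst k2))\<^sup>2 - u * v * (norm ((y1 - fst k1) - (y2 - fst k2)))\<^sup>2"
    by (simp only: power2_norm_convex_comb[OF assms])
  show ?thesis
    unfolding env_obj_def norm_eq by (simp add: algebra_simps)
qed

locale quad_envelope_setting =
  fixes L :: real and K :: "('a::euclidean_space \<times> real) set"
  assumes L_pos: "L > 0" and convex_K: "convex K"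
    and minimizer_exists: "\<And>y. \<exists>k. is_env_minimizer L K y k"
begin

lemma quad_envelope_eq:
  assumes "is_env_minimizer L K y k"
  shows "quad_envelope L K y = env_obj L y k"
  using assms unfolding quad_envelope_def is_env_minimizer_def by (intro cInf_eq_minimum) auto

lemma quad_envelope_le:
  assumes "k \<in> K"
  shows "quad_envelope L K y \<le> env_obj L y k"
proof -
  obtain k0 where "is_env_minimizer L K y k0" using minimizer_exists by blast
  then show ?thesis using assms quad_envelope_eq by (auto simp: is_env_minimizer_def)
qed

text \<open>Compare k with the feasible points (1 - s) k + s k' for small s > 0.\<close>
lemma env_minimizer_variational_ineq:
  assumes min: "is_env_minimizer L K y k" and "k' \<in> K"
  shows "0 \<le> L * ((fst k - y) \<bullet> (fst k' - fst k)) + (snd k' - snd k)"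
proof (rule nonneg_if_quadratic_nonneg_near_zero)
  fix s :: real assume "0 < s" "s \<le> 1"
  then have "(1 - s) *\<^sub>R k + s *\<^sub>R k' \<in> K"
    using min \<open>k' \<in> K\<close> convex_K by (intro convexD) (auto simp: is_env_minimizer_def)
  then have "env_obj L y k \<le> env_obj L y ((1 - s) *\<^sub>R k + s *\<^sub>R k')"
    using min by (simp add: is_env_minimizer_def)
  moreover have "y - fst ((1 - s) *\<^sub>R k + s *\<^sub>R k') = (y - fst k) - s *\<^sub>R (fst k' - fst k)"
    by (simp add: algebra_simps)
  ultimately show "0 \<le> (L * ((fst k - y) \<bullet> (fst k' - fst k)) + (snd k' - snd k)) * s
      + L / 2 * (norm (fst k' - fst k))\<^sup>2 * s\<^sup>2"
    unfolding env_obj_def power2_norm_eq_inner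
    by (simp add: inner_diff_left inner_diff_right inner_commute algebra_simps power2_eq_square)
qed

lemma env_minimizer_firmly_nonexpansive:
  assumes "is_env_minimizer L K y1 k1" "is_env_minimizer L K y2 k2"
  shows "(norm (fst k2 - fst k1))\<^sup>2 \<le> (y2 - y1) \<bullet> (fst k2 - fst k1)"
proof -
  have "0 \<le> L * ((fst k1 - y1) \<bullet> (fst k2 - fst k1)) + (snd k2 - snd k1)"
       "0 \<le> L * ((fst k2 - y2) \<bullet> (fst k1 - fst k2)) + (snd k1 - snd k2)"
    using assms by (auto intro: env_minimizer_variational_ineq simp: is_env_minimizer_def)
  then have "0 \<le> L * ((y2 - y1) \<bullet> (fst k2 - fst k1) - (fst k2 - fst k1) \<bullet> (fst k2 - fst k1))"
    by (simp add: inner_diff_left inner_diff_right inner_commute algebra_simps)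
  then show ?thesis
    using L_pos by (simp add: zero_le_mult_iff power2_norm_eq_inner)
qed

lemma env_minimizer_nonexpansive:
  assumes "is_env_minimizer L K y1 k1" "is_env_minimizer L K y2 k2"
  shows "norm (fst k2 - fst k1) \<le> norm (y2 - y1)"
proof -
  have "(norm (fst k2 - fst k1))\<^sup>2 \<le> norm (y2 - y1) * norm (fst k2 - fst k1)"
    using env_minimizer_firmly_nonexpansive[OF assms] norm_cauchy_schwarz order_trans by blast
  then show ?thesis
    by (metis mult_right_le_imp_le norm_ge_zero order_le_less power2_eq_square zero_le_mult_iff)
qed

lemma env_residual_nonexpansive:
  assumes "is_env_minimizer L K y1 k1" "is_env_minimizer L K y2 k2"
  shows "norm ((y2 - fst k2) - (y1 - fst k1)) \<le> norm (y2 - y1)"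
proof -
  have eq: "(y2 - fst k2) - (y1 - fst k1) = (y2 - y1) - (fst k2 - fst k1)"
    by (simp add: algebra_simps)
  have "(norm ((y2 - y1) - (fst k2 - fst k1)))\<^sup>2
      = (norm (y2 - y1))\<^sup>2 - 2 * ((y2 - y1) \<bullet> (fst k2 - fst k1)) + (norm (fst k2 - fst k1))\<^sup>2"
    unfolding power2_norm_eq_inner by (simp add: inner_diff_left inner_diff_right inner_commute)
  also have "\<dots> \<le> (norm (y2 - y1))\<^sup>2"
    using env_minimizer_firmly_nonexpansive[OF assms] zero_le_power2[of "norm (fst k2 - fst k1)"]
    by linarith
  finally show ?thesis
    unfolding eq by (rule power2_le_imp_le) simp
qed

text \<open>The envelope at y' is squeezed between the objective values of k and of the minimizer k' at y';
  both differ from the linearisation at y by O(|y' - y|^2), the latter by nonexpansiveness.\<close>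
lemma quad_envelope_has_derivative:
  assumes min: "is_env_minimizer L K y k"
  shows "(quad_envelope L K has_derivative (\<lambda>h. (L *\<^sub>R (y - fst k)) \<bullet> h)) (at y)"
proof (rule has_derivative_if_quadratic_remainder[where c = L])
  show "bounded_linear (\<lambda>h. (L *\<^sub>R (y - fst k)) \<bullet> h)" by (rule bounded_linear_inner_right)
  fix y'
  obtain k' where min': "is_env_minimizer L K y' k'" using minimizer_exists by blast
  define h where "h = y' - y"
  have obj_shift: "env_obj L y' k'' = env_obj L y k'' + L * ((y - fst k'') \<bullet> h) + L / 2 * (norm h)\<^sup>2" for k''
    unfolding env_obj_def h_def power2_norm_eq_inner
    by (simp add: inner_diff_left inner_diff_right inner_commute algebra_simps)
  have "\<bar>(fst k - fst k') \<bullet> h\<bar> \<le> norm (fst k - fst k') * norm h"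
    by (rule Cauchy_Schwarz_ineq2)
  also have "\<dots> \<le> norm h * norm h"
    using env_minimizer_nonexpansive[OF min min'] unfolding h_def
    by (intro mult_right_mono) (simp_all add: norm_minus_commute)
  finally have "- (L * (norm h)\<^sup>2) \<le> L * ((fst k - fst k') \<bullet> h)"
    using L_pos mult_left_mono[of "- (norm h)\<^sup>2" "(fst k - fst k') \<bullet> h" L]
    by (simp add: power2_eq_square abs_le_iff)
  moreover have "L * ((y - fst k') \<bullet> h) = L * ((y - fst k) \<bullet> h) + L * ((fst k - fst k') \<bullet> h)"
    by (simp add: inner_diff_left algebra_simps)
  moreover have "quad_envelope L K y' \<le> env_obj L y' k" "quad_envelope L K y \<le> env_obj L y k'"
    using min min' by (auto intro: quad_envelope_le simp: is_env_minimizer_def)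
  moreover have "0 \<le> L * (norm h)\<^sup>2"
    using L_pos by simp
  ultimately have "\<bar>quad_envelope L K y' - quad_envelope L K y - L * ((y - fst k) \<bullet> h)\<bar> \<le> L * (norm h)\<^sup>2"
    unfolding abs_le_iff
    using quad_envelope_eq[OF min] quad_envelope_eq[OF min'] obj_shift[of k] obj_shift[of k']
    by linarith
  then show "\<bar>quad_envelope L K y' - quad_envelope L K y - (L *\<^sub>R (y - fst k)) \<bullet> (y' - y)\<bar>
      \<le> L * (norm (y' - y))\<^sup>2"
    by (simp add: h_def)
qed

lemma convex_on_quad_envelope: "convex_on UNIV (quad_envelope L K)"
proof (rule convex_onI)
  fix y1 y2 :: 'a and u :: real assume "0 < u" "u < 1"
  obtain k1 k2 where min: "is_env_minimizer L K y1 k1" "is_env_minimizer L K y2 k2"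
    using minimizer_exists by metis
  then have "(1 - u) *\<^sub>R k1 + u *\<^sub>R k2 \<in> K"
    using \<open>0 < u\<close> \<open>u < 1\<close> convex_K by (intro convexD) (auto simp: is_env_minimizer_def)
  then have "quad_envelope L K ((1 - u) *\<^sub>R y1 + u *\<^sub>R y2)
      \<le> env_obj L ((1 - u) *\<^sub>R y1 + u *\<^sub>R y2) ((1 - u) *\<^sub>R k1 + u *\<^sub>R k2)"
    by (rule quad_envelope_le)
  also have "\<dots> \<le> (1 - u) * env_obj L y1 k1 + u * env_obj L y2 k2"
    using env_obj_convex_comb[of "1 - u" u L y1 y2 k1 k2] \<open>0 < u\<close> \<open>u < 1\<close> L_pos by simp
  finally show "quad_envelope L K ((1 - u) *\<^sub>R y1 + u *\<^sub>R y2)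
      \<le> (1 - u) * quad_envelope L K y1 + u * quad_envelope L K y2"
    using min by (simp add: quad_envelope_eq)
qed simp

lemma C11_quad_envelope: "C11 L (quad_envelope L K)"
proof -
  obtain k where min: "\<And>y. is_env_minimizer L K y (k y)"
    using minimizer_exists by metis
  show ?thesis unfolding C11_def
  proof (intro exI[of _ "\<lambda>y. L *\<^sub>R (y - fst (k y))"] conjI allI)
    show "(quad_envelope L K has_derivative (\<lambda>h. (L *\<^sub>R (y - fst (k y))) \<bullet> h)) (at y)" for y
      by (rule quad_envelope_has_derivative[OF min])
    show "norm (L *\<^sub>R (u - fst (k u)) - L *\<^sub>R (v - fst (k v))) \<le> L * norm (u - v)" for u v
    proof -
      have "norm ((u - fst (k u)) - (v - fst (k v))) \<le> norm (u - v)"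
        using env_residual_nonexpansive[OF min min, of v u] by (metis norm_minus_commute)
      then show ?thesis
        using L_pos by (simp flip: scaleR_diff_right add: mult_left_mono)
    qed
  qed
qed

end


lemma env_minimizer_exists_compact_minus_closed:
  fixes Q :: "('a::euclidean_space \<times> real) set" and C :: "'a set"
  assumes "compact Q" "Q \<noteq> {}" "closed C" "C \<noteq> {}" "0 \<le> L"
  shows "\<exists>k. is_env_minimizer L ((\<lambda>(q, \<nu>). (fst q - \<nu>, snd q)) ` (Q \<times> C)) y k"
proof -
  define \<phi> where "\<phi> q = L / 2 * (setdist {fst q - y} C)\<^sup>2 + snd q" for q :: "'a \<times> real"
  have "continuous_on Q (\<lambda>q. setdist {fst q - y} C)"
    by (rule continuous_on_compose2[OF continuous_on_setdist _ subset_UNIV]) (intro continuous_intros)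
  then have "continuous_on Q \<phi>"
    unfolding \<phi>_def by (intro continuous_intros)
  then obtain q0 where "q0 \<in> Q" and q0_min: "\<And>q. q \<in> Q \<Longrightarrow> \<phi> q0 \<le> \<phi> q"
    using continuous_attains_inf[OF assms(1,2)] by blast
  define \<nu>0 where "\<nu>0 = closest_point C (fst q0 - y)"
  have obj: "env_obj L y (fst q - \<nu>, snd q) = L / 2 * (dist (fst q - y) \<nu>)\<^sup>2 + snd q" for q \<nu>
  proof -
    have "y - (fst q - \<nu>) = - ((fst q - y) - \<nu>)" by simp
    then show ?thesis unfolding env_obj_def dist_norm by (metis fst_conv norm_minus_cancel snd_conv)
  qed
  have "env_obj L y (fst q0 - \<nu>0, snd q0) \<le> env_obj L y (fst q - \<nu>, snd q)" if "q \<in> Q" "\<nu> \<in> C" for q \<nu>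
  proof -
    have "setdist {fst q - y} C \<le> dist (fst q - y) \<nu>"
      using \<open>\<nu> \<in> C\<close> by (simp add: setdist_le_dist)
    then have "\<phi> q \<le> env_obj L y (fst q - \<nu>, snd q)"
      unfolding \<phi>_def obj using assms(5) by (simp add: mult_left_mono power_mono setdist_pos_le)
    moreover have "env_obj L y (fst q0 - \<nu>0, snd q0) = \<phi> q0"
      unfolding \<phi>_def obj \<nu>0_def using assms(3,4) by (simp add: setdist_closest_point)
    ultimately show ?thesis using q0_min[OF \<open>q \<in> Q\<close>] by linarith
  qed
  moreover have "\<nu>0 \<in> C"
    unfolding \<nu>0_def using assms(3,4) by (rule closest_point_in_set)
  ultimately show ?thesis
    using \<open>q0 \<in> Q\<close> unfolding is_env_minimizer_def by (intro exI[of _ "(fst q0 - \<nu>0, snd q0)"]) auto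
qed

lemma convex_minus_image:
  fixes Q :: "('a::real_vector \<times> real) set"
  assumes "convex Q" "convex C"
  shows "convex ((\<lambda>(q, \<nu>). (fst q - \<nu>, snd q)) ` (Q \<times> C))"
proof (rule convex_linear_image)
  show "linear (\<lambda>(q :: 'a \<times> real, \<nu>). (fst q - \<nu>, snd q))"
    by (simp add: linear_iff case_prod_beta algebra_simps)
qed (use assms convex_Times in blast)

lemma closest_point_eq_0_inner_nonpos:
  fixes a :: "'a::euclidean_space"
  assumes "convex C" "closed C" "\<nu> \<in> C" "closest_point C a = 0"
  shows "a \<bullet> \<nu> \<le> 0"
  using closest_point_dot[OF assms(1-3), of a] assms(4) by simp

locale interpolation_data =
  fixes L :: real and I :: "'i set" and x g :: "'i \<Rightarrow> 'a::euclidean_space"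
    and f :: "'i \<Rightarrow> real" and C :: "'a set"
  assumes L_pos: "L > 0" and finite_I: "finite I" and I_nonempty: "I \<noteq> {}"
    and closed_C: "closed C" and convex_C: "convex C" and zero_in_C: "0 \<in> C"
begin

definition node :: "'i \<Rightarrow> 'a \<times> real" where
  "node k = (x k - (1 / L) *\<^sub>R g k, f k - 1 / (2 * L) * (norm (g k))\<^sup>2)"

definition model_set :: "('a \<times> real) set" where
  "model_set = (\<lambda>(q, \<nu>). (fst q - \<nu>, snd q)) ` ((convex hull (node ` I)) \<times> C)"

lemma w_T_eq_env_obj:
  "w_T L I x g f y \<nu> \<alpha> = env_obj L y (fst (\<Sum>k\<in>I. \<alpha> k *\<^sub>R node k) - \<nu>, snd (\<Sum>k\<in>I. \<alpha> k *\<^sub>R node k))"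
  unfolding w_T_def env_obj_def node_def by (simp add: fst_sum snd_sum algebra_simps)

lemma mem_model_set_iff:
  "k \<in> model_set \<longleftrightarrow> (\<exists>q\<in>convex hull (node ` I). \<exists>\<nu>\<in>C. k = (fst q - \<nu>, snd q))"
  unfolding model_set_def by auto

lemma model_set_parametrization:
  "model_set = {(fst (\<Sum>k\<in>I. \<alpha> k *\<^sub>R node k) - \<nu>, snd (\<Sum>k\<in>I. \<alpha> k *\<^sub>R node k))
      | \<nu> \<alpha>. \<nu> \<in> C \<and> \<alpha> \<in> simplex_idx I}"
proof (intro equalityI subsetI)
  fix k assume "k \<in> model_set"
  then obtain q \<nu> where "q \<in> convex hull (node ` I)" "\<nu> \<in> C" "k = (fst q - \<nu>, snd q)"
    unfolding mem_model_set_iff by blast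
  moreover obtain \<alpha> where "\<alpha> \<in> simplex_idx I" "q = (\<Sum>k\<in>I. \<alpha> k *\<^sub>R node k)"
    using \<open>q \<in> convex hull (node ` I)\<close> unfolding convex_hull_indexed_finite[OF finite_I] by blast
  ultimately show "k \<in> {(fst (\<Sum>k\<in>I. \<alpha> k *\<^sub>R node k) - \<nu>, snd (\<Sum>k\<in>I. \<alpha> k *\<^sub>R node k))
      | \<nu> \<alpha>. \<nu> \<in> C \<and> \<alpha> \<in> simplex_idx I}" by blast
next
  fix k assume "k \<in> {(fst (\<Sum>k\<in>I. \<alpha> k *\<^sub>R node k) - \<nu>, snd (\<Sum>k\<in>I. \<alpha> k *\<^sub>R node k))
      | \<nu> \<alpha>. \<nu> \<in> C \<and> \<alpha> \<in> simplex_idx I}"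
  then obtain \<alpha> \<nu> where "\<alpha> \<in> simplex_idx I" "\<nu> \<in> C"
      "k = (fst (\<Sum>k\<in>I. \<alpha> k *\<^sub>R node k) - \<nu>, snd (\<Sum>k\<in>I. \<alpha> k *\<^sub>R node k))"
    by blast
  then show "k \<in> model_set"
    unfolding model_set_def convex_hull_indexed_finite[OF finite_I]
    by (intro image_eqI[of _ _ "(\<Sum>k\<in>I. \<alpha> k *\<^sub>R node k, \<nu>)"]) auto
qed

lemma w_T_values:
  "{w_T L I x g f y \<nu> \<alpha> | \<nu> \<alpha>. \<nu> \<in> C \<and> \<alpha> \<in> simplex_idx I} = env_obj L y ` model_set"
  unfolding model_set_parametrization w_T_eq_env_obj by blast

lemma W_T_eq_quad_envelope: "W_T L I x g f C = quad_envelope L model_set"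
  unfolding W_T_def quad_envelope_def w_T_values by (rule refl)

lemma quad_envelope_setting_model_set: "quad_envelope_setting L model_set"
proof
  show "convex model_set"
    unfolding model_set_def by (rule convex_minus_image[OF convex_convex_hull convex_C])
  show "\<exists>k. is_env_minimizer L model_set y k" for y
    unfolding model_set_def using finite_I I_nonempty closed_C zero_in_C L_pos
    by (intro env_minimizer_exists_compact_minus_closed compact_convex_hull finite_imp_compact) auto
qed (rule L_pos)

lemma W_T_minimum_attained:
  "\<exists>\<nu>\<in>C. \<exists>\<alpha>\<in>simplex_idx I. w_T L I x g f y \<nu> \<alpha> = W_T L I x g f C y
     \<and> (\<forall>\<nu>'\<in>C. \<forall>\<alpha>'\<in>simplex_idx I. w_T L I x g f y \<nu> \<alpha> \<le> w_T L I x g f y \<nu>' \<alpha>')"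
proof -
  interpret quad_envelope_setting L model_set by (rule quad_envelope_setting_model_set)
  obtain k where min: "is_env_minimizer L model_set y k"
    using minimizer_exists by blast
  then obtain \<nu> \<alpha> where "\<nu> \<in> C" "\<alpha> \<in> simplex_idx I" and "w_T L I x g f y \<nu> \<alpha> = env_obj L y k"
    unfolding is_env_minimizer_def model_set_parametrization w_T_eq_env_obj by blast
  moreover have "env_obj L y k \<le> w_T L I x g f y \<nu>' \<alpha>'" if "\<nu>' \<in> C" "\<alpha>' \<in> simplex_idx I" for \<nu>' \<alpha>'
    using min that unfolding is_env_minimizer_def model_set_parametrization w_T_eq_env_obj by blast
  moreover have "env_obj L y k = W_T L I x g f C y"
    using quad_envelope_eq[OF min] by (simp add: W_T_eq_quad_envelope)
  ultimately show ?thesis by metis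
qed

text \<open>Affine in node j, so that it passes to the convex hull of the nodes.\<close>
lemma node_gap:
  assumes "1 / (2 * L) * (norm (g i - g j))\<^sup>2 \<le> f j - f i - g i \<bullet> (x j - x i)"
  shows "f i - (norm (g i))\<^sup>2 / (2 * L) - g i \<bullet> fst (node i) \<le> (- g i, 1) \<bullet> node j"
proof -
  have "(norm (g i - g j))\<^sup>2 = (norm (g i))\<^sup>2 - 2 * (g i \<bullet> g j) + (norm (g j))\<^sup>2"
    unfolding power2_norm_eq_inner by (simp add: inner_diff_left inner_diff_right inner_commute)
  then have "1 / (2 * L) * (norm (g i - g j))\<^sup>2
      = (norm (g i))\<^sup>2 / (2 * L) - (g i \<bullet> g j) / L + (norm (g j))\<^sup>2 / (2 * L)"
    using L_pos by (simp add: field_simps)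
  moreover have "g i \<bullet> fst (node i) = g i \<bullet> x i - (norm (g i))\<^sup>2 / L"
    by (simp add: node_def inner_diff_right power2_norm_eq_inner)
  moreover have "(- g i, 1) \<bullet> node j = - (g i \<bullet> x j) + (g i \<bullet> g j) / L + f j - (norm (g j))\<^sup>2 / (2 * L)"
    by (simp add: node_def inner_diff_right)
  ultimately show ?thesis
    using assms by (simp add: inner_diff_right)
qed

lemma node_gap_convex_hull:
  assumes "\<forall>j\<in>I. 1 / (2 * L) * (norm (g i - g j))\<^sup>2 \<le> f j - f i - g i \<bullet> (x j - x i)"
    and "q \<in> convex hull (node ` I)"
  shows "f i - (norm (g i))\<^sup>2 / (2 * L) - g i \<bullet> fst (node i) \<le> (- g i, 1) \<bullet> q"
proof -
  have "node ` I \<subseteq> {q. f i - (norm (g i))\<^sup>2 / (2 * L) - g i \<bullet> fst (node i) \<le> (- g i, 1) \<bullet> q}"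
    using assms(1) node_gap by blast
  then have "convex hull (node ` I)
      \<subseteq> {q. f i - (norm (g i))\<^sup>2 / (2 * L) - g i \<bullet> fst (node i) \<le> (- g i, 1) \<bullet> q}"
    by (simp add: hull_minimal convex_halfspace_ge)
  then show ?thesis
    using assms(2) by blast
qed

lemma env_obj_at_data_point:
  "env_obj L (x i) k = (norm (g i))\<^sup>2 / (2 * L) + g i \<bullet> (fst (node i) - fst k)
     + L / 2 * (norm (fst (node i) - fst k))\<^sup>2 + snd k"
proof -
  define e where "e = fst (node i) - fst k"
  have "x i - fst k = (1 / L) *\<^sub>R g i + e"
    by (simp add: e_def node_def)
  moreover have "(norm ((1 / L) *\<^sub>R g i + e))\<^sup>2 = (norm (g i))\<^sup>2 / L\<^sup>2 + 2 * ((g i \<bullet> e) / L) + (norm e)\<^sup>2"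
    unfolding power2_norm_add using L_pos by (simp add: power_divide)
  ultimately have "env_obj L (x i) k = L / 2 * ((norm (g i))\<^sup>2 / L\<^sup>2 + 2 * ((g i \<bullet> e) / L) + (norm e)\<^sup>2) + snd k"
    unfolding env_obj_def by simp
  also have "\<dots> = (norm (g i))\<^sup>2 / (2 * L) + g i \<bullet> e + L / 2 * (norm e)\<^sup>2 + snd k"
    using L_pos by (simp add: field_simps power2_eq_square)
  finally show ?thesis
    unfolding e_def .
qed

lemma env_obj_node: "env_obj L (x k) (node k) = f k"
  unfolding env_obj_def node_def using L_pos by (simp add: power_divide field_simps power2_eq_square)

lemma node_is_env_minimizer:
  assumes "i \<in> I" and proj: "closest_point C (- (1 / L) *\<^sub>R g i) = 0"
    and interp: "\<forall>j\<in>I. 1 / (2 * L) * (norm (g i - g j))\<^sup>2 \<le> f j - f i - g i \<bullet> (x j - x i)"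
  shows "is_env_minimizer L model_set (x i) (node i)"
proof -
  have "f i \<le> env_obj L (x i) k" if "k \<in> model_set" for k
  proof -
    obtain q \<nu> where q: "q \<in> convex hull (node ` I)" and "\<nu> \<in> C" and k: "k = (fst q - \<nu>, snd q)"
      using \<open>k \<in> model_set\<close> unfolding mem_model_set_iff by blast
    have "0 \<le> g i \<bullet> \<nu> / L"
      using closest_point_eq_0_inner_nonpos[OF convex_C closed_C \<open>\<nu> \<in> C\<close> proj] by simp
    then have "0 \<le> g i \<bullet> \<nu>"
      using L_pos by (simp add: zero_le_divide_iff)
    moreover have "0 \<le> L / 2 * (norm (fst (node i) - (fst q - \<nu>)))\<^sup>2"
      using L_pos by simp
    ultimately show ?thesis
      using node_gap_convex_hull[OF interp q]
      unfolding k env_obj_at_data_point by (cases q) (simp add: inner_add_right inner_diff_right)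
  qed
  moreover have "node i \<in> model_set"
    using \<open>i \<in> I\<close> zero_in_C unfolding model_set_def
    by (intro image_eqI[of _ _ "(node i, 0)"]) (auto intro: hull_inc)
  ultimately show ?thesis
    unfolding is_env_minimizer_def env_obj_node by blast
qed

end

theorem theorem1:
  fixes L :: real and I :: "'i set" and x g :: "'i \<Rightarrow> 'a::euclidean_space"
    and f :: "'i \<Rightarrow> real" and C :: "'a set"
  assumes "L > 0" and "finite I" and "I \<noteq> {}"
    and "closed C" and "convex C" and "0 \<in> C"
  shows "(\<forall>y. \<exists>\<nu>\<in>C. \<exists>\<alpha>\<in>simplex_idx I.
              w_T L I x g f y \<nu> \<alpha> = W_T L I x g f C y
            \<and> (\<forall>\<nu>'\<in>C. \<forall>\<alpha>'\<in>simplex_idx I. w_T L I x g f y \<nu> \<alpha> \<le> w_T L I x g f y \<nu>' \<alpha>'))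
       \<and> convex_on UNIV (W_T L I x g f C)
       \<and> C11 L (W_T L I x g f C)
       \<and> (\<forall>i\<in>I. closest_point C (- (1 / L) *\<^sub>R g i) = 0
              \<and> (\<forall>j\<in>I. 1 / (2 * L) * (norm (g i - g j))\<^sup>2 \<le> f j - f i - g i \<bullet> (x j - x i))
            \<longrightarrow> W_T L I x g f C (x i) = f i
              \<and> (W_T L I x g f C has_derivative (\<lambda>h. g i \<bullet> h)) (at (x i)))"
proof -
  interpret interpolation_data L I x g f C
    using assms by unfold_locales
  interpret quad_envelope_setting L model_set
    by (rule quad_envelope_setting_model_set)
  have interpolation: "W_T L I x g f C (x i) = f i \<and> (W_T L I x g f C has_derivative (\<lambda>h. g i \<bullet> h)) (at (x i))"
    if "i \<in> I" "closest_point C (- (1 / L) *\<^sub>R g i) = 0"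
      "\<forall>j\<in>I. 1 / (2 * L) * (norm (g i - g j))\<^sup>2 \<le> f j - f i - g i \<bullet> (x j - x i)" for i
  proof -
    have min: "is_env_minimizer L model_set (x i) (node i)"
      using node_is_env_minimizer that .
    have "L *\<^sub>R (x i - fst (node i)) = g i"
      using L_pos by (simp add: node_def)
    then show ?thesis
      using quad_envelope_has_derivative[OF min] quad_envelope_eq[OF min]
      by (simp add: W_T_eq_quad_envelope env_obj_node)
  qed
  have "convex_on UNIV (W_T L I x g f C)" "C11 L (W_T L I x g f C)"
    by (simp_all add: W_T_eq_quad_envelope convex_on_quad_envelope C11_quad_envelope)
  then show ?thesis
    using W_T_minimum_attained interpolation by blast
qed

end
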